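(* Let $\Omega=(0,L)^2$ with periodic boundary conditions, $M$ a positive integer, $h=L/M$, and let $\mathbb{V}_h\cong\mathbb{R}^{M^2}$ be the space of real grid functions on the periodic grid $\{(ih,jh):1\le i,j\le M\}$. Let $\Lambda_h$ be the standard five-point central-difference matrix of the Laplacian with periodic boundary conditions, and $\varepsilon>0$. Let $\tau_k>0$ ($k\ge1$) be time steps, $t_k=\sum_{j\le k}\tau_j$, $t_0=0$, with step ratios $r_k=\tau_k/\tau_{k-1}$ for $k\ge2$ and $r_1:=0$. Let $u^n\in\mathbb{V}_h$ solve $$D_2u^n=\varepsilon^2\Lambda_hu^n-f(u^n),\qquad n\ge1,$$ where $f(u)=u^{3}-u$ componentwise, $D_2u^1=(u^1-u^0)/\tau_1$ and, for $n\ge2$, $D_2u^n=\frac{1+2r_n}{\tau_n(1+r_n)}(u^n-u^{n-1})-\frac{r_n^2}{\tau_n(1+r_n)}(u^{n-1}-u^{n-2})$. Assume $$0<r_k<\frac{3+\sqrt{17}}{2}\quad\text{for } 2\le k\le N,$$ and $$\tau_k\le\min\Big\{\frac{1+2r_k}{1+r_k},\ \frac{2+4r_k-r_k^2}{1+r_k}-\frac{r_{k+1}}{1+r_{k+1}}\Big\}\quad\text{for } k\ge1.$$ Define, for $k\ge0$, $$E[u^k]=-\frac{\varepsilon^2}{2}(u^k)^T\Lambda_hu^k+\frac14\sum_{i}\big(1-(u_i^k)^2\big)^2,$$ and the modified energy $\widehat E[u^0]=E[u^0]$ and, for $k\ge1$, $$\widehat E[u^k]=E[u^k]+\frac{r_{k+1}\tau_k}{2(1+r_{k+1})}\sum_i\Big(\frac{u_i^k-u_i^{k-1}}{\tau_k}\Big)^2,$$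 where sums run over all components (grid points). Then $\widehat E[u^k]\le\widehat E[u^{k-1}]$ for all $k\ge1$.
   Context: Nonlinear operations on vectors are componentwise. The ratios $r_{k+1}$ appearing in the step condition and modified energy refer to the (positive) ratio of the next step to the current step. *)

theory Defs
  imports Complex_Main
begin

text \<open>Periodic grid with M x M points, indexed by (i,j) with 0 <= i,j < M
  (the paper's index i in 1..M corresponds to i mod M). Grid functions are
  maps nat \<times> nat \<Rightarrow> real, of which only the values on the grid matter.\<close>

definition grid :: "nat \<Rightarrow> (nat \<times> nat) set" where
  "grid M = {0..<M} \<times> {0..<M}"

definition lap_h :: "real \<Rightarrow> nat \<Rightarrow> (nat \<times> nat \<Rightarrow> real) \<Rightarrow> nat \<times> nat \<Rightarrow> real" where
  "lap_h L M u p = (let h = L / real M; i = fst p; j = snd p in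
     (u ((i + 1) mod M, j) + u ((i + M - 1) mod M, j)
      + u (i, (j + 1) mod M) + u (i, (j + M - 1) mod M) - 4 * u (i, j)) / h\<^sup>2)"

definition ratio :: "(nat \<Rightarrow> real) \<Rightarrow> nat \<Rightarrow> real" where
  "ratio tau k = (if k \<ge> 2 then tau k / tau (k - 1) else 0)"

definition D2 :: "(nat \<Rightarrow> real) \<Rightarrow> (nat \<Rightarrow> nat \<times> nat \<Rightarrow> real) \<Rightarrow> nat \<Rightarrow> nat \<times> nat \<Rightarrow> real" where
  "D2 tau u n p =
     (if n = 1 then (u 1 p - u 0 p) / tau 1
      else (1 + 2 * ratio tau n) / (tau n * (1 + ratio tau n)) * (u n p - u (n - 1) p)
           - (ratio tau n)\<^sup>2 / (tau n * (1 + ratio tau n)) * (u (n - 1) p - u (n - 2) p))"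

definition energy :: "real \<Rightarrow> nat \<Rightarrow> real \<Rightarrow> (nat \<times> nat \<Rightarrow> real) \<Rightarrow> real" where
  "energy L M \<epsilon> v = - (\<epsilon>\<^sup>2 / 2) * (\<Sum>p\<in>grid M. v p * lap_h L M v p)
                      + (1 / 4) * (\<Sum>p\<in>grid M. (1 - (v p)\<^sup>2)\<^sup>2)"

definition mod_energy :: "real \<Rightarrow> nat \<Rightarrow> real \<Rightarrow> (nat \<Rightarrow> real) \<Rightarrow> (nat \<Rightarrow> nat \<times> nat \<Rightarrow> real) \<Rightarrow> nat \<Rightarrow> real" where
  "mod_energy L M \<epsilon> tau u k =
     (if k = 0 then energy L M \<epsilon> (u 0)
      else energy L M \<epsilon> (u k)
        + ratio tau (k + 1) * tau k / (2 * (1 + ratio tau (k + 1)))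
          * (\<Sum>p\<in>grid M. ((u k p - u (k - 1) p) / tau k)\<^sup>2))"

end

theory Submission
  imports Defs
begin

text \<open>Write \<open>\<delta>\<^sup>k = u\<^sup>k - u\<^sup>k\<^sup>-\<^sup>1\<close>. By summation by parts \<open>-\<Lambda>\<^sub>h\<close> is positive semidefinite, so the
  quadratic part of the energy is concave along \<open>\<delta>\<^sup>k\<close>; the double well satisfies
  \<open>W(a) - W(b) \<le> f(a)(a - b) + (a - b)\<^sup>2/2\<close>. Together with the scheme this gives
  \<open>E[u\<^sup>k] - E[u\<^sup>k\<^sup>-\<^sup>1] \<le> -\<langle>D\<^sub>2u\<^sup>k, \<delta>\<^sup>k\<rangle> + |\<delta>\<^sup>k|\<^sup>2/2\<close>. Expanding \<open>D\<^sub>2u\<^sup>k\<close> and bounding the cross term by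
  \<open>2\<langle>\<delta>\<^sup>k\<^sup>-\<^sup>1, \<delta>\<^sup>k\<rangle> \<le> |\<delta>\<^sup>k\<^sup>-\<^sup>1|\<^sup>2 + |\<delta>\<^sup>k|\<^sup>2\<close>, the \<open>|\<delta>\<^sup>k\<^sup>-\<^sup>1|\<^sup>2\<close> term is exactly the correction term of
  the modified energy at step \<open>k - 1\<close>, while the step-size bound makes the total coefficient of \<open>|\<delta>\<^sup>k|\<^sup>2\<close> nonpositive.\<close>

lemma sum_mult_second_difference:
  fixes x y :: "'a \<Rightarrow> 'b::comm_ring_1"
  assumes "\<And>p. p \<in> A \<Longrightarrow> \<sigma> p \<in> A \<and> \<sigma>' p \<in> A \<and> \<sigma> (\<sigma>' p) = p \<and> \<sigma>' (\<sigma> p) = p"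
  shows "(\<Sum>p\<in>A. x p * (y (\<sigma> p) + y (\<sigma>' p) - 2 * y p))
       = - (\<Sum>p\<in>A. (x (\<sigma> p) - x p) * (y (\<sigma> p) - y p))"
proof -
  have shift_cross: "(\<Sum>p\<in>A. x (\<sigma> p) * y p) = (\<Sum>p\<in>A. x p * y (\<sigma>' p))"
    by (rule sum.reindex_bij_witness[of _ \<sigma>' \<sigma>]) (use assms in auto)
  have shift_diag: "(\<Sum>p\<in>A. x (\<sigma> p) * y (\<sigma> p)) = (\<Sum>p\<in>A. x p * y p)"
    by (rule sum.reindex_bij_witness[of _ \<sigma>' \<sigma>]) (use assms in auto)
  have "(\<Sum>p\<in>A. x p * (y (\<sigma> p) + y (\<sigma>' p) - 2 * y p) + (x (\<sigma> p) - x p) * (y (\<sigma> p) - y p))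
      = (\<Sum>p\<in>A. (x p * y (\<sigma>' p) - x (\<sigma> p) * y p) + (x (\<sigma> p) * y (\<sigma> p) - x p * y p))"
    by (rule sum.cong) (simp_all add: algebra_simps)
  also have "\<dots> = 0"
    using shift_cross shift_diag by (simp add: sum.distrib sum_subtractf)
  finally show ?thesis
    by (simp add: sum.distrib eq_neg_iff_add_eq_0)
qed

definition east :: "nat \<Rightarrow> nat \<times> nat \<Rightarrow> nat \<times> nat" where
  "east M p = ((fst p + 1) mod M, snd p)"

definition west :: "nat \<Rightarrow> nat \<times> nat \<Rightarrow> nat \<times> nat" where
  "west M p = ((fst p + M - 1) mod M, snd p)"

definition north :: "nat \<Rightarrow> nat \<times> nat \<Rightarrow> nat \<times> nat" where
  "north M p = (fst p, (snd p + 1) mod M)"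

definition south :: "nat \<Rightarrow> nat \<times> nat \<Rightarrow> nat \<times> nat" where
  "south M p = (fst p, (snd p + M - 1) mod M)"

lemma succ_mod_pred_mod:
  fixes i M :: nat
  assumes "i < M"
  shows "((i + M - 1) mod M + 1) mod M = i"
proof -
  have "((i + M - 1) mod M + 1) mod M = (i + M - 1 + 1) mod M"
    by (rule mod_add_left_eq)
  also have "i + M - 1 + 1 = i + M"
    using assms by simp
  finally show ?thesis
    using assms by simp
qed

lemma pred_mod_succ_mod:
  fixes i M :: nat
  assumes "i < M"
  shows "((i + 1) mod M + M - 1) mod M = i"
proof -
  have "(i + 1) mod M + M - 1 = (i + 1) mod M + (M - 1)"
    using assms by simp
  then have "((i + 1) mod M + M - 1) mod M = (i + 1 + (M - 1)) mod M"
    by (simp add: mod_add_left_eq)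
  also have "i + 1 + (M - 1) = i + M"
    using assms by simp
  finally show ?thesis
    using assms by simp
qed

lemma east_west_inverse:
  "p \<in> grid M \<Longrightarrow> east M p \<in> grid M \<and> west M p \<in> grid M
     \<and> east M (west M p) = p \<and> west M (east M p) = p"
  using succ_mod_pred_mod[of "fst p" M] pred_mod_succ_mod[of "fst p" M]
  by (cases p) (auto simp: grid_def east_def west_def)

lemma north_south_inverse:
  "p \<in> grid M \<Longrightarrow> north M p \<in> grid M \<and> south M p \<in> grid M
     \<and> north M (south M p) = p \<and> south M (north M p) = p"
  using succ_mod_pred_mod[of "snd p" M] pred_mod_succ_mod[of "snd p" M]
  by (cases p) (auto simp: grid_def north_def south_def)

lemma lap_h_eq:
  "lap_h L M u p = (u (east M p) + u (west M p) - 2 * u p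
                    + (u (north M p) + u (south M p) - 2 * u p)) / (L / real M)\<^sup>2"
  by (simp add: lap_h_def Let_def east_def west_def north_def south_def)

definition dirichlet_form :: "nat \<Rightarrow> (nat \<times> nat \<Rightarrow> real) \<Rightarrow> (nat \<times> nat \<Rightarrow> real) \<Rightarrow> real" where
  "dirichlet_form M x y = (\<Sum>p\<in>grid M.
      (x (east M p) - x p) * (y (east M p) - y p) + (x (north M p) - x p) * (y (north M p) - y p))"

lemma sum_mult_lap_h:
  "(\<Sum>p\<in>grid M. x p * lap_h L M y p) = - dirichlet_form M x y / (L / real M)\<^sup>2"
  unfolding lap_h_eq times_divide_eq_right sum_divide_distrib[symmetric] distrib_left
  by (simp add: sum.distrib dirichlet_form_def
      sum_mult_second_difference[OF east_west_inverse] sum_mult_second_difference[OF north_south_inverse])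

lemma dirichlet_form_diff_square:
  "dirichlet_form M a a - dirichlet_form M b b - 2 * dirichlet_form M (\<lambda>p. a p - b p) a
     = - dirichlet_form M (\<lambda>p. a p - b p) (\<lambda>p. a p - b p)"
  unfolding dirichlet_form_def sum_distrib_left sum_subtractf[symmetric] sum_negf[symmetric]
  by (rule sum.cong) (simp_all add: algebra_simps power2_eq_square)

lemma dirichlet_form_nonneg: "dirichlet_form M x x \<ge> 0"
  unfolding dirichlet_form_def by (rule sum_nonneg) simp

lemma sum_mult_lap_h_diff_le:
  "2 * (\<Sum>p\<in>grid M. (a p - b p) * lap_h L M a p)
     \<le> (\<Sum>p\<in>grid M. a p * lap_h L M a p) - (\<Sum>p\<in>grid M. b p * lap_h L M b p)"
proof -
  let ?D = "dirichlet_form M" and ?h2 = "(L / real M)\<^sup>2"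
  have "(\<Sum>p\<in>grid M. a p * lap_h L M a p) - (\<Sum>p\<in>grid M. b p * lap_h L M b p)
          - 2 * (\<Sum>p\<in>grid M. (a p - b p) * lap_h L M a p)
      = - (?D a a - ?D b b - 2 * ?D (\<lambda>p. a p - b p) a) / ?h2"
    by (simp add: sum_mult_lap_h diff_divide_distrib)
  also have "\<dots> = ?D (\<lambda>p. a p - b p) (\<lambda>p. a p - b p) / ?h2"
    by (simp add: dirichlet_form_diff_square)
  also have "\<dots> \<ge> 0"
    by (simp add: dirichlet_form_nonneg)
  finally show ?thesis
    by simp
qed

lemma double_well_diff_le:
  fixes a b :: real
  shows "(1 - a\<^sup>2)\<^sup>2 / 4 - (1 - b\<^sup>2)\<^sup>2 / 4 \<le> (a ^ 3 - a) * (a - b) + (a - b)\<^sup>2 / 2"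
proof -
  have "(a ^ 3 - a) * (a - b) + (a - b)\<^sup>2 / 2 - ((1 - a\<^sup>2)\<^sup>2 / 4 - (1 - b\<^sup>2)\<^sup>2 / 4)
      = (a - b)\<^sup>2 * (((a + b) / 2)\<^sup>2 + a\<^sup>2 / 2)"
    by (simp add: power2_eq_square power3_eq_cube field_simps)
  also have "\<dots> \<ge> 0"
    by simp
  finally show ?thesis
    by simp
qed

lemma energy_diff_le_residual:
  assumes residual: "\<And>p. p \<in> grid M \<Longrightarrow> d p = \<epsilon>\<^sup>2 * lap_h L M a p - (a p ^ 3 - a p)"
  shows "energy L M \<epsilon> a - energy L M \<epsilon> b
           \<le> - (\<Sum>p\<in>grid M. d p * (a p - b p)) + (\<Sum>p\<in>grid M. (a p - b p)\<^sup>2) / 2"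
proof -
  have quadratic: "- (\<epsilon>\<^sup>2 / 2) * ((\<Sum>p\<in>grid M. a p * lap_h L M a p) - (\<Sum>p\<in>grid M. b p * lap_h L M b p))
      \<le> - \<epsilon>\<^sup>2 * (\<Sum>p\<in>grid M. (a p - b p) * lap_h L M a p)"
    using mult_left_mono[OF sum_mult_lap_h_diff_le[of a b L M], of "\<epsilon>\<^sup>2"] by simp
  have double_well: "(\<Sum>p\<in>grid M. (1 - (a p)\<^sup>2)\<^sup>2 / 4 - (1 - (b p)\<^sup>2)\<^sup>2 / 4)
      \<le> (\<Sum>p\<in>grid M. (a p ^ 3 - a p) * (a p - b p) + (a p - b p)\<^sup>2 / 2)"
    by (rule sum_mono) (rule double_well_diff_le)
  have "(\<Sum>p\<in>grid M. d p * (a p - b p))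
      = (\<Sum>p\<in>grid M. \<epsilon>\<^sup>2 * ((a p - b p) * lap_h L M a p) - (a p ^ 3 - a p) * (a p - b p))"
    by (rule sum.cong) (simp_all add: residual algebra_simps)
  then have pairing: "(\<Sum>p\<in>grid M. d p * (a p - b p))
      = \<epsilon>\<^sup>2 * (\<Sum>p\<in>grid M. (a p - b p) * lap_h L M a p) - (\<Sum>p\<in>grid M. (a p ^ 3 - a p) * (a p - b p))"
    by (simp add: sum_subtractf sum_distrib_left)
  have "energy L M \<epsilon> a - energy L M \<epsilon> b =
      - (\<epsilon>\<^sup>2 / 2) * ((\<Sum>p\<in>grid M. a p * lap_h L M a p) - (\<Sum>p\<in>grid M. b p * lap_h L M b p))
      + (\<Sum>p\<in>grid M. (1 - (a p)\<^sup>2)\<^sup>2 / 4 - (1 - (b p)\<^sup>2)\<^sup>2 / 4)"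
    by (simp add: energy_def sum_subtractf sum_divide_distrib[symmetric] algebra_simps)
  with quadratic double_well pairing show ?thesis
    by (simp add: sum.distrib sum_divide_distrib)
qed

lemma sum_mult_le_sum_squares:
  fixes x y :: "'a \<Rightarrow> real"
  shows "2 * (\<Sum>p\<in>A. x p * y p) \<le> (\<Sum>p\<in>A. (x p)\<^sup>2) + (\<Sum>p\<in>A. (y p)\<^sup>2)"
proof -
  have "(\<Sum>p\<in>A. 2 * x p * y p) \<le> (\<Sum>p\<in>A. (x p)\<^sup>2 + (y p)\<^sup>2)"
    by (rule sum_mono) (rule sum_squares_bound)
  then show ?thesis
    by (simp add: sum_distrib_left sum.distrib mult.assoc)
qed

lemma ratio_nonneg:
  assumes "\<And>j. j \<ge> 1 \<Longrightarrow> tau j > 0"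
  shows "ratio tau k \<ge> 0"
proof (cases "k \<ge> 2")
  case True
  then have "tau k > 0" "tau (k - 1) > 0"
    using assms by auto
  with True show ?thesis
    by (simp add: ratio_def)
qed (simp add: ratio_def)

text \<open>Since \<open>r\<^sub>1 = 0\<close>, the BDF2 formula also covers the BDF1 start.\<close>
lemma D2_eq:
  assumes "n \<ge> 1"
  shows "D2 tau u n p =
    (1 + 2 * ratio tau n) / (tau n * (1 + ratio tau n)) * (u n p - u (n - 1) p)
    - (ratio tau n)\<^sup>2 / (tau n * (1 + ratio tau n)) * (u (n - 1) p - u (n - 2) p)"
  using assms by (simp add: D2_def ratio_def)

lemma sum_D2_mult_diff_eq:
  assumes "n \<ge> 1"
  shows "(\<Sum>p\<in>A. D2 tau u n p * (u n p - u (n - 1) p))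
    = (1 + 2 * ratio tau n) / (tau n * (1 + ratio tau n)) * (\<Sum>p\<in>A. (u n p - u (n - 1) p)\<^sup>2)
      - (ratio tau n)\<^sup>2 / (tau n * (1 + ratio tau n))
        * (\<Sum>p\<in>A. (u (n - 1) p - u (n - 2) p) * (u n p - u (n - 1) p))"
proof -
  define c\<^sub>1 where "c\<^sub>1 = (1 + 2 * ratio tau n) / (tau n * (1 + ratio tau n))"
  define c\<^sub>2 where "c\<^sub>2 = (ratio tau n)\<^sup>2 / (tau n * (1 + ratio tau n))"
  have "D2 tau u n p * (u n p - u (n - 1) p)
      = c\<^sub>1 * (u n p - u (n - 1) p)\<^sup>2 - c\<^sub>2 * ((u (n - 1) p - u (n - 2) p) * (u n p - u (n - 1) p))" for p
    unfolding D2_eq[OF assms] c\<^sub>1_def[symmetric] c\<^sub>2_def[symmetric]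
    by (simp add: power2_eq_square algebra_simps)
  then show ?thesis
    by (simp add: c\<^sub>1_def[symmetric] c\<^sub>2_def[symmetric] sum_subtractf sum_distrib_left)
qed

lemma mod_energy_eq:
  assumes tau_pos: "\<And>j. j \<ge> 1 \<Longrightarrow> tau j > 0"
  shows "mod_energy L M \<epsilon> tau u k = energy L M \<epsilon> (u k)
    + ratio tau (k + 1) / (2 * (1 + ratio tau (k + 1)) * tau k) * (\<Sum>p\<in>grid M. (u k p - u (k - 1) p)\<^sup>2)"
proof (cases "k = 0")
  case False
  define q where "q = 1 + ratio tau (k + 1)"
  have "tau k > 0" "q > 0"
    using False tau_pos ratio_nonneg[of tau "k + 1", OF tau_pos] by (simp_all add: q_def)
  then have "ratio tau (k + 1) * tau k / (2 * q) * ((u k p - u (k - 1) p) / tau k)\<^sup>2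
      = ratio tau (k + 1) / (2 * q * tau k) * (u k p - u (k - 1) p)\<^sup>2" for p
    by (simp add: power2_eq_square field_simps)
  then show ?thesis
    using False by (simp add: mod_energy_def sum_distrib_left q_def)
qed (simp add: mod_energy_def ratio_def)

text \<open>The correction term at step \<open>k - 1\<close>, rewritten with \<open>r\<^sub>k/\<tau>\<^sub>k\<^sub>-\<^sub>1 = r\<^sub>k\<^sup>2/\<tau>\<^sub>k\<close>.\<close>
lemma mod_energy_prev_eq:
  assumes tau_pos: "\<And>j. j \<ge> 1 \<Longrightarrow> tau j > 0" and "k \<ge> 1"
  shows "mod_energy L M \<epsilon> tau u (k - 1) = energy L M \<epsilon> (u (k - 1))
    + (ratio tau k)\<^sup>2 / (2 * (1 + ratio tau k) * tau k) * (\<Sum>p\<in>grid M. (u (k - 1) p - u (k - 2) p)\<^sup>2)"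
proof (cases "k = 1")
  case False
  then have k: "k - 1 \<ge> 1" "k - 1 + 1 = k" "k - 1 - 1 = k - 2" "ratio tau k = tau k / tau (k - 1)"
    using \<open>k \<ge> 1\<close> by (auto simp: ratio_def)
  define q where "q = 2 * (1 + ratio tau k)"
  have "ratio tau k / tau (k - 1) = (ratio tau k)\<^sup>2 / tau k"
    using tau_pos[OF k(1)] tau_pos[OF \<open>k \<ge> 1\<close>] by (simp add: k(4) power2_eq_square)
  then have "ratio tau k / (q * tau (k - 1)) = (ratio tau k)\<^sup>2 / (q * tau k)"
    by (metis divide_divide_eq_left mult.commute)
  then show ?thesis
    using mod_energy_eq[of tau, OF tau_pos, where k = "k - 1"] by (simp only: k(2,3) q_def)
qed (simp add: mod_energy_def ratio_def)

text \<open>\<open>S = |\<delta>\<^sup>k|\<^sup>2\<close>, \<open>P = |\<delta>\<^sup>k\<^sup>-\<^sup>1|\<^sup>2\<close>, \<open>X = \<langle>\<delta>\<^sup>k\<^sup>-\<^sup>1, \<delta>\<^sup>k\<rangle>\<close>, \<open>r = r\<^sub>k\<close> and \<open>r' = r\<^sub>k\<^sub>+\<^sub>1\<close>.\<close>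
lemma bdf2_dissipation_le:
  fixes \<tau> r r' S P X :: real
  assumes "\<tau> > 0" "r \<ge> 0" "r' \<ge> 0" "S \<ge> 0" and cross: "2 * X \<le> P + S"
    and step: "\<tau> \<le> (2 + 4 * r - r\<^sup>2) / (1 + r) - r' / (1 + r')"
  shows "- ((1 + 2 * r) / (\<tau> * (1 + r)) * S - r\<^sup>2 / (\<tau> * (1 + r)) * X) + S / 2
           + r' / (2 * (1 + r') * \<tau>) * S
         \<le> r\<^sup>2 / (2 * (1 + r) * \<tau>) * P"
proof -
  define coeff where "coeff = (\<tau> - (2 + 4 * r - r\<^sup>2) / (1 + r) + r' / (1 + r')) / (2 * \<tau>)"
  have "coeff \<le> 0"
    using step \<open>\<tau> > 0\<close> by (simp add: coeff_def divide_nonpos_pos)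
  have "r\<^sup>2 / (\<tau> * (1 + r)) * X \<le> r\<^sup>2 / (\<tau> * (1 + r)) * ((P + S) / 2)"
    using cross assms(1,2) by (intro mult_left_mono) simp_all
  moreover have "- ((1 + 2 * r) / (\<tau> * (1 + r)) * S) + r\<^sup>2 / (\<tau> * (1 + r)) * ((P + S) / 2) + S / 2
           + r' / (2 * (1 + r') * \<tau>) * S = coeff * S + r\<^sup>2 / (2 * (1 + r) * \<tau>) * P"
  proof -
    define q q' where "q = 1 + r" and "q' = 1 + r'"
    have "q > 0" "q' > 0"
      using assms(2,3) by (simp_all add: q_def q'_def)
    with \<open>\<tau> > 0\<close> show ?thesis
      unfolding coeff_def q_def[symmetric] q'_def[symmetric]
      by (simp add: power2_eq_square field_simps)
  qed
  moreover have "coeff * S \<le> 0"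
    using \<open>coeff \<le> 0\<close> \<open>S \<ge> 0\<close> by (simp add: mult_nonpos_nonneg)
  ultimately show ?thesis
    by linarith
qed

lemma mod_energy_step_le:
  assumes tau_pos: "\<And>j. j \<ge> 1 \<Longrightarrow> tau j > 0" and k: "k \<ge> 1"
    and scheme: "\<And>p. p \<in> grid M \<Longrightarrow>
        D2 tau u k p = \<epsilon>\<^sup>2 * lap_h L M (u k) p - ((u k p) ^ 3 - u k p)"
    and step: "tau k \<le> (2 + 4 * ratio tau k - (ratio tau k)\<^sup>2) / (1 + ratio tau k)
                 - ratio tau (k + 1) / (1 + ratio tau (k + 1))"
  shows "mod_energy L M \<epsilon> tau u k \<le> mod_energy L M \<epsilon> tau u (k - 1)"
proof -
  define \<delta> where "\<delta> j p = u j p - u (j - 1) p" for j p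
  define S where "S = (\<Sum>p\<in>grid M. (\<delta> k p)\<^sup>2)"
  define P where "P = (\<Sum>p\<in>grid M. (\<delta> (k - 1) p)\<^sup>2)"
  define X where "X = (\<Sum>p\<in>grid M. \<delta> (k - 1) p * \<delta> k p)"
  have "mod_energy L M \<epsilon> tau u k = energy L M \<epsilon> (u k)
      + ratio tau (k + 1) / (2 * (1 + ratio tau (k + 1)) * tau k) * S"
    using mod_energy_eq[of tau, OF tau_pos, where k = k] by (simp add: S_def \<delta>_def)
  moreover have "mod_energy L M \<epsilon> tau u (k - 1) = energy L M \<epsilon> (u (k - 1))
      + (ratio tau k)\<^sup>2 / (2 * (1 + ratio tau k) * tau k) * P"
    using mod_energy_prev_eq[of tau k, OF tau_pos k] by (simp add: P_def \<delta>_def numeral_2_eq_2)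
  moreover have "energy L M \<epsilon> (u k) - energy L M \<epsilon> (u (k - 1))
      \<le> - (\<Sum>p\<in>grid M. D2 tau u k p * \<delta> k p) + S / 2"
    unfolding S_def \<delta>_def by (rule energy_diff_le_residual) (rule scheme)
  moreover have "(\<Sum>p\<in>grid M. D2 tau u k p * \<delta> k p)
      = (1 + 2 * ratio tau k) / (tau k * (1 + ratio tau k)) * S
        - (ratio tau k)\<^sup>2 / (tau k * (1 + ratio tau k)) * X"
    using sum_D2_mult_diff_eq[OF k] by (simp add: S_def X_def \<delta>_def numeral_2_eq_2)
  moreover have "- ((1 + 2 * ratio tau k) / (tau k * (1 + ratio tau k)) * S
        - (ratio tau k)\<^sup>2 / (tau k * (1 + ratio tau k)) * X) + S / 2
        + ratio tau (k + 1) / (2 * (1 + ratio tau (k + 1)) * tau k) * S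
      \<le> (ratio tau k)\<^sup>2 / (2 * (1 + ratio tau k) * tau k) * P"
  proof (rule bdf2_dissipation_le)
    show "2 * X \<le> P + S"
      using sum_mult_le_sum_squares unfolding S_def P_def X_def by blast
    show "S \<ge> 0"
      unfolding S_def by (simp add: sum_nonneg)
  qed (use step tau_pos[OF k] ratio_nonneg[of tau, OF tau_pos] in auto)
  ultimately show ?thesis
    by linarith
qed

theorem theorem3p1:
  fixes L \<epsilon> :: real and M N :: nat
    and tau :: "nat \<Rightarrow> real" and u :: "nat \<Rightarrow> nat \<times> nat \<Rightarrow> real"
  assumes L_pos: "L > 0" and M_pos: "M > 0" and eps_pos: "\<epsilon> > 0"
    and tau_pos: "\<And>k. k \<ge> 1 \<Longrightarrow> tau k > 0"
    and scheme: "\<And>n p. n \<ge> 1 \<Longrightarrow> p \<in> grid M \<Longrightarrow>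
        D2 tau u n p = \<epsilon>\<^sup>2 * lap_h L M (u n) p - ((u n p) ^ 3 - u n p)"
    and ratio_bound: "\<And>k. 2 \<le> k \<Longrightarrow> k \<le> N \<Longrightarrow>
        0 < ratio tau k \<and> ratio tau k < (3 + sqrt 17) / 2"
    and step_bound: "\<And>k. k \<ge> 1 \<Longrightarrow>
        tau k \<le> min ((1 + 2 * ratio tau k) / (1 + ratio tau k))
                     ((2 + 4 * ratio tau k - (ratio tau k)\<^sup>2) / (1 + ratio tau k)
                       - ratio tau (k + 1) / (1 + ratio tau (k + 1)))"
  shows "\<forall>k. 1 \<le> k \<and> k \<le> N \<longrightarrow> mod_energy L M \<epsilon> tau u k \<le> mod_energy L M \<epsilon> tau u (k - 1)"
proof (intro allI impI)
  fix k assume "1 \<le> k \<and> k \<le> N"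
  then show "mod_energy L M \<epsilon> tau u k \<le> mod_energy L M \<epsilon> tau u (k - 1)"
    using step_bound[of k] by (intro mod_energy_step_le[OF tau_pos]) (simp_all add: scheme)
qed

end
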